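(* Let $J\subseteq\mathcal I_{int}$ be finite and let $\kappa,\kappa'$ be $J$-interval words over $\Sigma$ with $\kappa\sim\kappa'$. If for every $I\in J$, $\mathsf{first}(\kappa,I)=\mathsf{first}(\kappa',I)$ and $\mathsf{last}(\kappa,I)=\mathsf{last}(\kappa',I)$, then $\kappa\cong\kappa'$.
   Context: Fix a finite set $\Sigma$ of propositions. A timed word over $\Sigma$ is a finite sequence $\rho=(\sigma_1,\tau_1)\cdots(\sigma_n,\tau_n)$ with $\emptyset\neq\sigma_i\subseteq\Sigma$, $\tau_i\in\mathbb R_{\ge0}$, $\tau_1=0$, $\tau_i\le\tau_j$ for $i\le j$; $dom(\rho)=\{1,\dots,n\}$; a pointed timed word is a pair $(\rho,i)$ with $i\in dom(\rho)$. $\mathcal I_{int}$ is the set of open, half-open or closed real intervals with endpoints in $\mathbb Z\cup\{-\infty,\infty\}$. Interval words: let $J\subseteq\mathcal I_{int}$ be finite and $\mathsf{anch}$ a fresh symbol. A $J$-interval word over $\Sigma$ is a finite word $\kappa=a_1\cdots a_n$ with $a_j\subseteq\Sigma\cup J\cup\{\mathsf{anch}\}$ such that exactly one position $i$, denoted $\mathsf{anch}(\kappa)$, has $\mathsf{anch}\in a_i$, and $a_i\subseteq\Sigma\cup\{\mathsf{anch}\}$ there. For $I\in J$, position $j$ is $I$-time restricted iff $I\in a_j$. A pointed timed word $(\rho,i)$ with $\rho=(\sigma_1,\tau_1)\cdots(\sigma_m,\tau_m)$ is consistent with $\kappa$ iff $m=n$, $i=\mathsf{anch}(\kappa)$, $\sigma_j=a_j\cap\Sigma$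 for all $j$, and $\tau_j-\tau_i\in I$ for all $j\neq i$ and all $I\in a_j\cap J$. $\mathsf{Time}(\kappa)$ is the set of pointed timed words consistent with $\kappa$. Interval words $\kappa=a_1\cdots a_n$, $\kappa'=b_1\cdots b_m$ are similar ($\kappa\sim\kappa'$) iff $n=m$, $a_j\cap\Sigma=b_j\cap\Sigma$ for all $j$ and $\mathsf{anch}(\kappa)=\mathsf{anch}(\kappa')$; congruent ($\kappa\cong\kappa'$) iff $\mathsf{Time}(\kappa)=\mathsf{Time}(\kappa')$. $\mathsf{first}(\kappa,I)$ and $\mathsf{last}(\kappa,I)$ denote the least and greatest $I$-time restricted positions of $\kappa$ ($\bot$ if there is none). *)

theory Defs
  imports Main "HOL-Library.Extended_Real"
begin

datatype lbound = LNegInf | LPosInf | LClosed int | LOpen int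
datatype ubound = UNegInf | UPosInf | UClosed int | UOpen int

fun lower_ok :: "lbound \<Rightarrow> real \<Rightarrow> bool" where
  "lower_ok LNegInf x = True"
| "lower_ok LPosInf x = False"
| "lower_ok (LClosed a) x = (real_of_int a \<le> x)"
| "lower_ok (LOpen a) x = (real_of_int a < x)"

fun upper_ok :: "ubound \<Rightarrow> real \<Rightarrow> bool" where
  "upper_ok UNegInf x = False"
| "upper_ok UPosInf x = True"
| "upper_ok (UClosed b) x = (x \<le> real_of_int b)"
| "upper_ok (UOpen b) x = (x < real_of_int b)"

definition interval_set :: "lbound \<Rightarrow> ubound \<Rightarrow> real set" where
  "interval_set l u = {x. lower_ok l x \<and> upper_ok u x}"

definition Iint :: "real set set" where
  "Iint = {interval_set l u | l u. True}"

(* Timed words: lists of (letter, timestamp), positions 0-based *)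
definition timed_word :: "'p set \<Rightarrow> ('p set \<times> real) list \<Rightarrow> bool" where
  "timed_word \<Sigma> \<rho> \<longleftrightarrow> \<rho> \<noteq> [] \<and>
     (\<forall>j<length \<rho>. fst (\<rho>!j) \<noteq> {} \<and> fst (\<rho>!j) \<subseteq> \<Sigma> \<and> snd (\<rho>!j) \<ge> 0) \<and>
     snd (\<rho>!0) = 0 \<and>
     (\<forall>i j. i \<le> j \<and> j < length \<rho> \<longrightarrow> snd (\<rho>!i) \<le> snd (\<rho>!j))"

definition pointed_timed_word :: "'p set \<Rightarrow> ('p set \<times> real) list \<times> nat \<Rightarrow> bool" where
  "pointed_timed_word \<Sigma> \<rho>i \<longleftrightarrow> timed_word \<Sigma> (fst \<rho>i) \<and> snd \<rho>i < length (fst \<rho>i)"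

datatype 'p isym = Prop 'p | Intv "real set" | Anch

type_synonym 'p iword = "'p isym set list"

definition props :: "'p isym set \<Rightarrow> 'p set" where
  "props a = {p. Prop p \<in> a}"

definition intvs :: "'p isym set \<Rightarrow> real set set" where
  "intvs a = {I. Intv I \<in> a}"

definition interval_word :: "'p set \<Rightarrow> real set set \<Rightarrow> 'p iword \<Rightarrow> bool" where
  "interval_word \<Sigma> J \<kappa> \<longleftrightarrow>
     (\<forall>j<length \<kappa>. \<kappa>!j \<subseteq> Prop ` \<Sigma> \<union> Intv ` J \<union> {Anch}) \<and>
     (\<exists>!i. i < length \<kappa> \<and> Anch \<in> \<kappa>!i) \<and>
     (\<forall>i<length \<kappa>. Anch \<in> \<kappa>!i \<longrightarrow> \<kappa>!i \<subseteq> Prop ` \<Sigma> \<union> {Anch})"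

definition anch :: "'p iword \<Rightarrow> nat" where
  "anch \<kappa> = (THE i. i < length \<kappa> \<and> Anch \<in> \<kappa>!i)"

definition consistent :: "('p set \<times> real) list \<times> nat \<Rightarrow> 'p iword \<Rightarrow> bool" where
  "consistent \<rho>i \<kappa> \<longleftrightarrow> (let \<rho> = fst \<rho>i; i = snd \<rho>i in
     length \<rho> = length \<kappa> \<and> i = anch \<kappa> \<and>
     (\<forall>j<length \<kappa>. fst (\<rho>!j) = props (\<kappa>!j)) \<and>
     (\<forall>j<length \<kappa>. j \<noteq> i \<longrightarrow> (\<forall>I\<in>intvs (\<kappa>!j). snd (\<rho>!j) - snd (\<rho>!i) \<in> I)))"

definition Time :: "'p set \<Rightarrow> 'p iword \<Rightarrow> (('p set \<times> real) list \<times> nat) set" where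
  "Time \<Sigma> \<kappa> = {\<rho>i. pointed_timed_word \<Sigma> \<rho>i \<and> consistent \<rho>i \<kappa>}"

definition similar :: "'p iword \<Rightarrow> 'p iword \<Rightarrow> bool" where
  "similar \<kappa> \<kappa>' \<longleftrightarrow> length \<kappa> = length \<kappa>' \<and>
     (\<forall>j<length \<kappa>. props (\<kappa>!j) = props (\<kappa>'!j)) \<and> anch \<kappa> = anch \<kappa>'"

definition congruent :: "'p set \<Rightarrow> 'p iword \<Rightarrow> 'p iword \<Rightarrow> bool" where
  "congruent \<Sigma> \<kappa> \<kappa>' \<longleftrightarrow> Time \<Sigma> \<kappa> = Time \<Sigma> \<kappa>'"

(* first / last I-time restricted positions; None plays the role of \<bottom> *)
definition first_pos :: "'p iword \<Rightarrow> real set \<Rightarrow> nat option" where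
  "first_pos \<kappa> I = (if \<exists>j<length \<kappa>. Intv I \<in> \<kappa>!j
      then Some (LEAST j. j < length \<kappa> \<and> Intv I \<in> \<kappa>!j) else None)"

definition last_pos :: "'p iword \<Rightarrow> real set \<Rightarrow> nat option" where
  "last_pos \<kappa> I = (if \<exists>j<length \<kappa>. Intv I \<in> \<kappa>!j
      then Some (GREATEST j. j < length \<kappa> \<and> Intv I \<in> \<kappa>!j) else None)"

end

theory Submission
  imports Defs
begin

text \<open>Timestamps are nondecreasing and every interval of \<open>J\<close> is convex, so once the
  first and the last \<open>I\<close>-time restricted positions of an interval word satisfy their
  constraint, so does every position between them. Hence \<open>Time \<kappa>\<close> depends on \<open>\<kappa>\<close> only
  through its letters, its anchor, and \<open>first(\<kappa>, I)\<close>, \<open>last(\<kappa>, I)\<close> for \<open>I \<in> J\<close>.\<close>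

lemma Iint_convex:
  assumes "I \<in> Iint" "a \<in> I" "b \<in> I" "a \<le> x" "x \<le> b"
  shows "x \<in> I"
proof -
  obtain l u where "I = interval_set l u" using assms(1) unfolding Iint_def by blast
  then show ?thesis using assms(2-5) unfolding interval_set_def
    by (cases l; cases u; auto)
qed

lemma first_pos_SomeD:
  assumes "first_pos \<kappa> I = Some f"
  shows "f < length \<kappa>" "Intv I \<in> \<kappa>!f" "\<And>j. j < length \<kappa> \<Longrightarrow> Intv I \<in> \<kappa>!j \<Longrightarrow> f \<le> j"
proof -
  have ex: "\<exists>j. j < length \<kappa> \<and> Intv I \<in> \<kappa>!j"
    and f: "f = (LEAST j. j < length \<kappa> \<and> Intv I \<in> \<kappa>!j)"
    using assms unfolding first_pos_def by (auto split: if_splits)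
  show "f < length \<kappa>" "Intv I \<in> \<kappa>!f" using LeastI_ex[OF ex] f by auto
  show "\<And>j. j < length \<kappa> \<Longrightarrow> Intv I \<in> \<kappa>!j \<Longrightarrow> f \<le> j" using f by (simp add: Least_le)
qed

lemma last_pos_SomeD:
  assumes "last_pos \<kappa> I = Some l"
  shows "l < length \<kappa>" "Intv I \<in> \<kappa>!l" "\<And>j. j < length \<kappa> \<Longrightarrow> Intv I \<in> \<kappa>!j \<Longrightarrow> j \<le> l"
proof -
  let ?P = "\<lambda>j. j < length \<kappa> \<and> Intv I \<in> \<kappa>!j"
  obtain j0 where "?P j0" and l: "l = (GREATEST j. ?P j)"
    using assms unfolding last_pos_def by (auto split: if_splits)
  have bounded: "\<And>y. ?P y \<Longrightarrow> y \<le> length \<kappa>" by simp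
  have "?P l" unfolding l using \<open>?P j0\<close> bounded by (rule GreatestI_nat)
  then show "l < length \<kappa>" "Intv I \<in> \<kappa>!l" by blast+
  show "j \<le> l" if "j < length \<kappa>" "Intv I \<in> \<kappa>!j" for j
  proof -
    have "?P j" using that ..
    then show ?thesis unfolding l using bounded by (rule Greatest_le_nat)
  qed
qed

lemma first_last_pos_bracket:
  assumes "j < length \<kappa>" "Intv I \<in> \<kappa>!j"
  obtains f l where "first_pos \<kappa> I = Some f" "last_pos \<kappa> I = Some l" "f \<le> j" "j \<le> l"
proof -
  have "\<exists>j<length \<kappa>. Intv I \<in> \<kappa>!j" using assms by blast
  then obtain f l where f: "first_pos \<kappa> I = Some f" and l: "last_pos \<kappa> I = Some l"
    unfolding first_pos_def last_pos_def by simp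
  moreover have "f \<le> j" using first_pos_SomeD(3)[OF f assms] .
  moreover have "j \<le> l" using last_pos_SomeD(3)[OF l assms] .
  ultimately show thesis by (rule that)
qed

lemma interval_word_intv_mem:
  assumes "interval_word \<Sigma> J \<kappa>" "j < length \<kappa>" "Intv I \<in> \<kappa>!j"
  shows "I \<in> J"
  using assms unfolding interval_word_def by blast

lemma interval_word_anch:
  assumes "interval_word \<Sigma> J \<kappa>"
  shows "anch \<kappa> < length \<kappa>" "Intv I \<notin> \<kappa>!(anch \<kappa>)"
proof -
  have "\<exists>!i. i < length \<kappa> \<and> Anch \<in> \<kappa>!i" using assms unfolding interval_word_def by blast
  then have a: "anch \<kappa> < length \<kappa> \<and> Anch \<in> \<kappa>!(anch \<kappa>)"
    unfolding anch_def by (rule theI')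
  then have "\<kappa>!(anch \<kappa>) \<subseteq> Prop ` \<Sigma> \<union> {Anch}" using assms unfolding interval_word_def by blast
  then show "anch \<kappa> < length \<kappa>" "Intv I \<notin> \<kappa>!(anch \<kappa>)" using a by auto
qed

definition endpoint_positions :: "'p iword \<Rightarrow> real set \<Rightarrow> nat set" where
  "endpoint_positions \<kappa> I = set_option (first_pos \<kappa> I) \<union> set_option (last_pos \<kappa> I)"

lemma endpoint_positionsD:
  assumes "j \<in> endpoint_positions \<kappa> I"
  shows "j < length \<kappa>" "Intv I \<in> \<kappa>!j"
  using assms first_pos_SomeD(1,2) last_pos_SomeD(1,2)
  unfolding endpoint_positions_def by fastforce+

lemma restricted_position_in_interval:
  assumes "I \<in> Iint"
    and mono: "\<And>a b. a \<le> b \<Longrightarrow> b < length \<kappa> \<Longrightarrow> t a \<le> (t b :: real)"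
    and endpoints: "\<And>k. k \<in> endpoint_positions \<kappa> I \<Longrightarrow> t k \<in> I"
    and "j < length \<kappa>" "Intv I \<in> \<kappa>!j"
  shows "t j \<in> I"
proof -
  obtain f l where f: "first_pos \<kappa> I = Some f" and l: "last_pos \<kappa> I = Some l"
    and "f \<le> j" "j \<le> l"
    using first_last_pos_bracket[OF assms(4,5)] by blast
  have "t f \<in> I" "t l \<in> I" using endpoints f l unfolding endpoint_positions_def by auto
  moreover have "t f \<le> t j" "t j \<le> t l"
    using mono \<open>f \<le> j\<close> \<open>j \<le> l\<close> \<open>j < length \<kappa>\<close> last_pos_SomeD(1)[OF l] by auto
  ultimately show ?thesis using Iint_convex[OF \<open>I \<in> Iint\<close>] by blast
qed

lemma consistent_iff_endpoint_positions:
  assumes "J \<subseteq> Iint" and w: "interval_word \<Sigma> J \<kappa>"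
    and ptw: "pointed_timed_word \<Sigma> (\<rho>, i)"
  shows "consistent (\<rho>, i) \<kappa> \<longleftrightarrow>
    (length \<rho> = length \<kappa> \<and> i = anch \<kappa> \<and> (\<forall>j<length \<kappa>. fst (\<rho>!j) = props (\<kappa>!j))) \<and>
    (\<forall>I\<in>J. \<forall>j\<in>endpoint_positions \<kappa> I. snd (\<rho>!j) - snd (\<rho>!i) \<in> I)"
    (is "_ \<longleftrightarrow> ?shape \<and> ?endpoints")
proof -
  let ?t = "\<lambda>j. snd (\<rho>!j) - snd (\<rho>!i)"
  have mono: "\<And>a b. a \<le> b \<Longrightarrow> b < length \<rho> \<Longrightarrow> ?t a \<le> ?t b"
    using ptw unfolding pointed_timed_word_def timed_word_def by auto
  have consistent_unfolded: "consistent (\<rho>, i) \<kappa> \<longleftrightarrow> ?shape \<and>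
      (\<forall>j<length \<kappa>. j \<noteq> i \<longrightarrow> (\<forall>I. Intv I \<in> \<kappa>!j \<longrightarrow> ?t j \<in> I))"
    unfolding consistent_def intvs_def Let_def by simp
  show ?thesis
  proof
    assume "consistent (\<rho>, i) \<kappa>"
    then have "?shape" and timing: "\<And>j I. j < length \<kappa> \<Longrightarrow> j \<noteq> i \<Longrightarrow> Intv I \<in> \<kappa>!j \<Longrightarrow> ?t j \<in> I"
      unfolding consistent_unfolded by blast+
    have "?t j \<in> I" if "j \<in> endpoint_positions \<kappa> I" for I j
    proof -
      have "j < length \<kappa>" "Intv I \<in> \<kappa>!j" using endpoint_positionsD[OF that] by blast+
      moreover have "j \<noteq> i" using \<open>Intv I \<in> \<kappa>!j\<close> \<open>?shape\<close> interval_word_anch(2)[OF w] by blast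
      ultimately show ?thesis using timing by blast
    qed
    with \<open>?shape\<close> show "?shape \<and> ?endpoints" by blast
  next
    assume "?shape \<and> ?endpoints"
    then have "?shape" and endpoints: "?endpoints" by blast+
    have "?t j \<in> I" if "j < length \<kappa>" "Intv I \<in> \<kappa>!j" for j I
    proof -
      have "I \<in> J" using interval_word_intv_mem[OF w that] .
      show ?thesis
        using restricted_position_in_interval[where t = ?t, OF _ _ _ that] mono
          endpoints \<open>I \<in> J\<close> \<open>J \<subseteq> Iint\<close> \<open>?shape\<close> by auto
    qed
    with \<open>?shape\<close> show "consistent (\<rho>, i) \<kappa>" unfolding consistent_unfolded by blast
  qed
qed

theorem lemma6:
  fixes \<Sigma> :: "'p set" and J :: "real set set" and \<kappa> \<kappa>' :: "'p iword"
  assumes "finite \<Sigma>" and "finite J" and "J \<subseteq> Iint"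
    and "interval_word \<Sigma> J \<kappa>" and "interval_word \<Sigma> J \<kappa>'"
    and "similar \<kappa> \<kappa>'"
    and "\<forall>I\<in>J. first_pos \<kappa> I = first_pos \<kappa>' I \<and> last_pos \<kappa> I = last_pos \<kappa>' I"
  shows "congruent \<Sigma> \<kappa> \<kappa>'"
proof -
  have "\<forall>I\<in>J. endpoint_positions \<kappa> I = endpoint_positions \<kappa>' I"
    using assms(7) unfolding endpoint_positions_def by simp
  then have "consistent (\<rho>, i) \<kappa> \<longleftrightarrow> consistent (\<rho>, i) \<kappa>'"
    if "pointed_timed_word \<Sigma> (\<rho>, i)" for \<rho> i
    using consistent_iff_endpoint_positions[OF assms(3) _ that] assms(4-6)
    unfolding similar_def by auto
  then show ?thesis unfolding congruent_def Time_def by auto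
qed

end
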